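(* Let $n\ge1$, $p\in\{0,\dots,n\}$, $\mathcal{X}=\{x\in\{0,1\}^n:\sum_{i=1}^n x_i=p\}$, $\hat c\in\mathbb{R}^n_{\ge0}$, and for $\lambda\in[0,1]$ let $\mathcal{U}(\lambda)=\prod_{i=1}^n[(1-\lambda)\hat c_i,(1+\lambda)\hat c_i]$. For $x\in\mathcal{X}$ define \[ reg(x,\lambda)=\max_{c\in\mathcal{U}(\lambda)}\Big(c^tx-\min_{y\in\mathcal{X}}c^ty\Big),\qquad \lambda\in[0,1], \] and let $\overline{\Lambda}(x)\subseteq[0,1]$ be the set of changepoints (breakpoints) of the piecewise linear function $reg(x,\cdot)$. Then $|\overline{\Lambda}(x)|\in\mathcal{O}(\min\{p,n-p\})$ for every fixed $x\in\mathcal{X}$, and there is a set $\overline{\Lambda}\subseteq[0,1]$ with $|\overline{\Lambda}|\in\mathcal{O}(n^2)$ such that $\overline{\Lambda}(x)\subseteq\overline{\Lambda}$ for all $x\in\mathcal{X}$.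
   Context: For fixed $x$, $reg(x,\lambda)=\max_{y\in\mathcal{X}}\big((1+\lambda)\hat c^tx-\sum_i \hat c_i(1-\lambda+2\lambda x_i)y_i\big)$ is a maximum of finitely many affine functions of $\lambda$, hence piecewise linear; its changepoints are the values of $\lambda$ where the slope changes. *)

theory Defs
  imports Complex_Main
begin

text \<open>Vectors in R^n are functions nat => real; only indices i < n matter.
  Feasible set X = {x in {0,1}^n : sum x_i = p}; entries beyond n are fixed to 0.\<close>
definition feas :: "nat \<Rightarrow> nat \<Rightarrow> (nat \<Rightarrow> real) set" where
  "feas n p = {x. (\<forall>i<n. x i \<in> {0, 1}) \<and> (\<forall>i\<ge>n. x i = 0) \<and> (\<Sum>i<n. x i) = real p}"

definition unc :: "nat \<Rightarrow> (nat \<Rightarrow> real) \<Rightarrow> real \<Rightarrow> (nat \<Rightarrow> real) set" where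
  "unc n ch lam = {c. (\<forall>i<n. (1 - lam) * ch i \<le> c i \<and> c i \<le> (1 + lam) * ch i) \<and> (\<forall>i\<ge>n. c i = 0)}"

definition ip :: "nat \<Rightarrow> (nat \<Rightarrow> real) \<Rightarrow> (nat \<Rightarrow> real) \<Rightarrow> real" where
  "ip n c x = (\<Sum>i<n. c i * x i)"

text \<open>reg(x, lambda) = max over c in U(lambda) of (c^t x - min over y in X of c^t y).
  The maximum is attained (compact set, continuous function), so it equals the supremum.\<close>
definition reg :: "nat \<Rightarrow> nat \<Rightarrow> (nat \<Rightarrow> real) \<Rightarrow> (nat \<Rightarrow> real) \<Rightarrow> real \<Rightarrow> real" where
  "reg n p ch x lam = (SUP c \<in> unc n ch lam. ip n c x - Min ((\<lambda>y. ip n c y) ` feas n p))"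

definition changepoints :: "(real \<Rightarrow> real) \<Rightarrow> real set" where
  "changepoints f = {t \<in> {0<..<1}. \<not> (\<exists>e>0. \<exists>a b. \<forall>s\<in>{t - e<..<t + e}. f s = a * s + b)}"

end

theory Submission
  imports Defs
begin

text \<open>For fixed \<open>x\<close> the adversary's best cost vector raises the costs on the ones of \<open>x\<close> to
  \<open>(1 + \<lambda>) ch\<close> and lowers all others to \<open>(1 - \<lambda>) ch\<close>, and the best reply \<open>y\<close> differs from \<open>x\<close>
  by a swap of equally many ones \<open>D\<close> and zeros \<open>A\<close>. Hence \<open>reg(x, \<cdot>)\<close> is the upper envelope of
  the lines \<open>(1 + \<lambda>) ch(D) - (1 - \<lambda>) ch(A)\<close>. Only the best swap of each size
  \<open>k \<le> min p (n - p)\<close> matters, and an upper envelope of \<open>m + 1\<close> lines has at most \<open>m\<close>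
  breakpoints. At a breakpoint two optimal swaps have different slopes; comparing them by an
  exchange argument yields a one \<open>i\<close> and a zero \<open>j\<close> with \<open>(1 + \<lambda>) ch i = (1 - \<lambda>) ch j\<close>, so
  \<open>\<lambda>\<close> is one of the at most \<open>n\<^sup>2\<close> ratios \<open>(ch j - ch i) / (ch i + ch j)\<close>.\<close>

section \<open>Upper envelopes of lines\<close>

definition envelope :: "'a set \<Rightarrow> ('a \<Rightarrow> real) \<Rightarrow> ('a \<Rightarrow> real) \<Rightarrow> real \<Rightarrow> real" where
  "envelope I a b t = Max ((\<lambda>k. a k + b k * t) ` I)"

definition active :: "'a set \<Rightarrow> ('a \<Rightarrow> real) \<Rightarrow> ('a \<Rightarrow> real) \<Rightarrow> real \<Rightarrow> 'a set" where
  "active I a b t = {k \<in> I. a k + b k * t = envelope I a b t}"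

lemma envelope_ge: "finite I \<Longrightarrow> k \<in> I \<Longrightarrow> a k + b k * t \<le> envelope I a b t"
  unfolding envelope_def by (rule Max_ge) auto

lemma active_nonempty:
  assumes "finite I" "I \<noteq> {}"
  shows "active I a b t \<noteq> {}"
proof -
  have "envelope I a b t \<in> (\<lambda>k. a k + b k * t) ` I"
    unfolding envelope_def using assms by (intro Max_in) auto
  then show ?thesis unfolding active_def by force
qed

lemma active_slope_mono:
  assumes "finite I" "t < s" "k \<in> active I a b t" "l \<in> active I a b s"
  shows "b k \<le> b l"
proof -
  have "a l + b l * t \<le> a k + b k * t" "a k + b k * s \<le> a l + b l * s"
    using assms envelope_ge[OF \<open>finite I\<close>] unfolding active_def by (metis (mono_tags, lifting) mem_Collect_eq)+
  then have "(b k - b l) * (s - t) \<le> 0" by (simp add: algebra_simps)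
  then show ?thesis using \<open>t < s\<close> by (simp add: mult_le_0_iff)
qed

lemma active_eventually_subset:
  assumes "finite I"
  shows "eventually (\<lambda>s. active I a b s \<subseteq> active I a b t) (nhds t)"
proof -
  have "eventually (\<lambda>s. k \<notin> active I a b s) (nhds t)" if k: "k \<in> I - active I a b t" for k
  proof -
    have "a k + b k * t < envelope I a b t"
      using k envelope_ge[OF assms, of k a b t] unfolding active_def by auto
    then obtain l where l: "l \<in> I" "a k + b k * t < a l + b l * t"
      using Max_in[of "(\<lambda>k. a k + b k * t) ` I"] assms k unfolding envelope_def by fastforce
    have "((\<lambda>s. (a l + b l * s) - (a k + b k * s)) \<longlongrightarrow> (a l + b l * t) - (a k + b k * t)) (nhds t)"
      by (intro tendsto_intros filterlim_ident)
    from order_tendstoD(1)[OF this, of 0] l(2)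
    have "eventually (\<lambda>s. a k + b k * s < a l + b l * s) (nhds t)" by simp
    then show ?thesis
    proof eventually_elim
      case (elim s)
      with envelope_ge[OF assms l(1), of a b s] show ?case by (auto simp: active_def)
    qed
  qed
  then have "eventually (\<lambda>s. \<forall>k\<in>I - active I a b t. k \<notin> active I a b s) (nhds t)"
    using assms by (intro eventually_ball_finite) auto
  then show ?thesis by eventually_elim (auto simp: active_def)
qed

lemma changepoint_envelopeD:
  assumes "finite I" "I \<noteq> {}" "t \<in> changepoints (envelope I a b)"
  shows "\<exists>k\<in>active I a b t. \<exists>l\<in>active I a b t. b k < b l"
proof (rule ccontr)
  assume "\<not> ?thesis"
  then have same_slope: "b k = b l" if "k \<in> active I a b t" "l \<in> active I a b t" for k l
    using that by (cases "b k < b l"; cases "b l < b k") auto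
  obtain k0 where k0: "k0 \<in> active I a b t" using active_nonempty[OF assms(1,2)] by blast
  have "eventually (\<lambda>s. envelope I a b s = b k0 * s + a k0) (nhds t)"
    using active_eventually_subset[OF assms(1), of a b t]
  proof eventually_elim
    case (elim s)
    obtain k where k: "k \<in> active I a b s" using active_nonempty[OF assms(1,2)] by blast
    with elim have kt: "k \<in> active I a b t" by blast
    have "b k = b k0" using same_slope[OF kt k0] .
    moreover from this kt k0 have "a k = a k0" by (simp add: active_def)
    ultimately show ?case using k by (simp add: active_def)
  qed
  then obtain e where "e > 0" "\<forall>s. dist s t < e \<longrightarrow> envelope I a b s = b k0 * s + a k0"
    unfolding eventually_nhds_metric by blast
  then have "\<forall>s\<in>{t - e<..<t + e}. envelope I a b s = b k0 * s + a k0"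
    by (auto simp: dist_real_def abs_less_iff)
  then have "\<exists>e>0. \<exists>c d. \<forall>s\<in>{t - e<..<t + e}. envelope I a b s = c * s + d"
    using \<open>e > 0\<close> by blast
  with assms(3) show False unfolding changepoints_def by blast
qed

lemma card_changepoints_envelope:
  assumes "finite I" "I \<noteq> {}"
  shows "finite (changepoints (envelope I a b)) \<and> card (changepoints (envelope I a b)) \<le> card I - 1"
proof -
  define C where "C = changepoints (envelope I a b)"
  define top_slope where "top_slope t = Max (b ` active I a b t)" for t
  have fin_active: "finite (active I a b t)" for t using assms(1) by (simp add: active_def)
  have top_slope_ge: "b k \<le> top_slope t" if "k \<in> active I a b t" for k t
    unfolding top_slope_def using that fin_active by (intro Max_ge) auto
  have top_slope_attained: "\<exists>k\<in>active I a b t. top_slope t = b k" for t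
  proof -
    have "top_slope t \<in> b ` active I a b t"
      unfolding top_slope_def using fin_active active_nonempty[OF assms] by (intro Max_in) auto
    then show ?thesis by auto
  qed
  have mono: "top_slope t < top_slope s" if "t \<in> C" and s: "s \<in> C" and "t < s" for t s
  proof -
    obtain k where k: "k \<in> active I a b t" "top_slope t = b k" using top_slope_attained by blast
    obtain l m where lm: "l \<in> active I a b s" "m \<in> active I a b s" "b l < b m"
      using changepoint_envelopeD[OF assms] s C_def by blast
    have "b k \<le> b l" using active_slope_mono[OF assms(1) \<open>t < s\<close> k(1) lm(1)] .
    with k(2) lm(3) top_slope_ge[OF lm(2)] show ?thesis by linarith
  qed
  have inj: "inj_on top_slope C"
  proof (rule inj_onI)
    fix t s assume "t \<in> C" "s \<in> C" "top_slope t = top_slope s"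
    then show "t = s" using mono[of t s] mono[of s t] by (cases t s rule: linorder_cases) auto
  qed
  have "top_slope ` C \<subseteq> b ` I - {Min (b ` I)}"
  proof
    fix z assume "z \<in> top_slope ` C"
    then obtain t where t: "t \<in> C" "z = top_slope t" by blast
    obtain k l where kl: "k \<in> active I a b t" "l \<in> active I a b t" "b k < b l"
      using changepoint_envelopeD[OF assms] t(1) C_def by blast
    have "Min (b ` I) \<le> b k" using kl(1) assms(1) by (intro Min_le) (auto simp: active_def)
    moreover have "b l \<le> top_slope t" using top_slope_ge[OF kl(2)] .
    moreover obtain m where "m \<in> active I a b t" "top_slope t = b m" using top_slope_attained by blast
    ultimately show "z \<in> b ` I - {Min (b ` I)}" using kl(3) t(2) by (auto simp: active_def)
  qed
  moreover have "finite (b ` I - {Min (b ` I)})" using assms(1) by simp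
  ultimately have "finite C" and "card C \<le> card (b ` I - {Min (b ` I)})"
    using inj_on_finite[OF inj] card_inj_on_le[OF inj] by simp_all
  moreover have "card (b ` I - {Min (b ` I)}) \<le> card I - 1"
    using assms card_image_le[OF assms(1), of b] by (simp add: card_Diff_singleton)
  ultimately show ?thesis using C_def by simp
qed

lemma changepoints_cong:
  assumes "\<And>s. s \<in> {0..1} \<Longrightarrow> f s = g s"
  shows "changepoints f = changepoints g"
proof -
  have "t \<in> changepoints f" if "t \<in> changepoints g" "\<And>s. s \<in> {0..1} \<Longrightarrow> f s = g s"
    for f g :: "real \<Rightarrow> real" and t
  proof (rule ccontr)
    assume "t \<notin> changepoints f"
    with that(1) obtain e c d where t: "0 < t" "t < 1" and "e > 0"
      and affine: "\<forall>s\<in>{t - e<..<t + e}. f s = c * s + d"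
      unfolding changepoints_def by auto
    define e' where "e' = min e (min t (1 - t))"
    have "e' > 0" using t \<open>e > 0\<close> by (simp add: e'_def)
    moreover have "\<forall>s\<in>{t - e'<..<t + e'}. g s = c * s + d"
    proof
      fix s assume "s \<in> {t - e'<..<t + e'}"
      then have "s \<in> {0..1}" "s \<in> {t - e<..<t + e}" by (auto simp: e'_def)
      then show "g s = c * s + d" using affine that(2) by metis
    qed
    ultimately show False using that(1) unfolding changepoints_def by blast
  qed
  with assms show ?thesis by (metis subsetI subset_antisym)
qed

section \<open>The regret as an envelope of swap lines\<close>

definition ones :: "nat \<Rightarrow> (nat \<Rightarrow> real) \<Rightarrow> nat set" where
  "ones n x = {i. i < n \<and> x i = 1}"

definition zeros :: "nat \<Rightarrow> (nat \<Rightarrow> real) \<Rightarrow> nat set" where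
  "zeros n x = {i. i < n \<and> x i = 0}"

definition swaps :: "nat \<Rightarrow> (nat \<Rightarrow> real) \<Rightarrow> (nat set \<times> nat set) set" where
  "swaps n x = {(D, A). D \<subseteq> ones n x \<and> A \<subseteq> zeros n x \<and> card D = card A}"

definition flip :: "(nat \<Rightarrow> real) \<Rightarrow> nat set \<Rightarrow> nat set \<Rightarrow> nat \<Rightarrow> real" where
  "flip x D A i = (if i \<in> D then 0 else if i \<in> A then 1 else x i)"

definition swap_offset :: "(nat \<Rightarrow> real) \<Rightarrow> nat set \<times> nat set \<Rightarrow> real" where
  "swap_offset ch P = sum ch (fst P) - sum ch (snd P)"

definition swap_slope :: "(nat \<Rightarrow> real) \<Rightarrow> nat set \<times> nat set \<Rightarrow> real" where
  "swap_slope ch P = sum ch (fst P) + sum ch (snd P)"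

abbreviation optimal_swaps :: "nat \<Rightarrow> (nat \<Rightarrow> real) \<Rightarrow> (nat \<Rightarrow> real) \<Rightarrow> real \<Rightarrow> (nat set \<times> nat set) set" where
  "optimal_swaps n ch x \<equiv> active (swaps n x) (swap_offset ch) (swap_slope ch)"

lemma swap_line: "swap_offset ch (D, A) + swap_slope ch (D, A) * t = (1 + t) * sum ch D - (1 - t) * sum ch A"
  by (simp add: swap_offset_def swap_slope_def algebra_simps)

lemma finite_ones [simp]: "finite (ones n x)" and finite_zeros [simp]: "finite (zeros n x)"
  by (simp_all add: ones_def zeros_def)

lemma finite_swaps: "finite (swaps n x)"
proof (rule finite_subset)
  show "swaps n x \<subseteq> Pow {..<n} \<times> Pow {..<n}" by (auto simp: swaps_def ones_def zeros_def)
qed simp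

lemma empty_swap: "({}, {}) \<in> swaps n x"
  by (simp add: swaps_def)

lemma swapsD:
  assumes "(D, A) \<in> swaps n x"
  shows "D \<subseteq> ones n x" "A \<subseteq> zeros n x" "card D = card A" "finite D" "finite A"
  using assms finite_subset[of D "ones n x"] finite_subset[of A "zeros n x"] by (auto simp: swaps_def)

lemma finite_feas: "finite (feas n p)"
proof (rule finite_subset)
  show "feas n p \<subseteq> (\<lambda>B i. if i \<in> B then 1 else 0) ` Pow {..<n}"
  proof
    fix y assume y: "y \<in> feas n p"
    have "y i = (if i \<in> {i. i < n \<and> y i = 1} then 1 else 0)" for i
      using y by (cases "i < n") (auto simp: feas_def)
    then have "y = (\<lambda>i. if i \<in> {i. i < n \<and> y i = 1} then 1 else 0)" ..
    then show "y \<in> (\<lambda>B i. if i \<in> B then 1 else 0) ` Pow {..<n}" by blast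
  qed
qed simp

lemma ip_diff_flip:
  assumes "D \<subseteq> ones n x" "A \<subseteq> zeros n x"
  shows "ip n c x - ip n c (flip x D A) = sum c D - sum c A"
proof -
  have "c i * (x i - flip x D A i) = (if i \<in> D then c i else 0) - (if i \<in> A then c i else 0)" for i
    using assms by (auto simp: flip_def ones_def zeros_def)
  then have "ip n c x - ip n c (flip x D A) = sum c ({..<n} \<inter> D) - sum c ({..<n} \<inter> A)"
    by (simp add: ip_def sum_subtractf[symmetric] right_diff_distrib[symmetric] sum.inter_restrict)
  moreover have "{..<n} \<inter> D = D" "{..<n} \<inter> A = A"
    using assms by (auto simp: ones_def zeros_def)
  ultimately show ?thesis by simp
qed

lemma ip_one_feas: "y \<in> feas n p \<Longrightarrow> ip n (\<lambda>_. 1) y = real p"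
  by (simp add: ip_def feas_def)

lemma flip_feas:
  assumes x: "x \<in> feas n p" and P: "(D, A) \<in> swaps n x"
  shows "flip x D A \<in> feas n p"
proof -
  note DA = swapsD[OF P]
  have "ip n (\<lambda>_. 1) x - ip n (\<lambda>_. 1) (flip x D A) = 0"
    using ip_diff_flip[OF DA(1,2)] DA(3) by simp
  then have "(\<Sum>i<n. flip x D A i) = real p"
    using ip_one_feas[OF x] by (simp add: ip_def)
  moreover have "\<forall>i<n. flip x D A i \<in> {0, 1}" "\<forall>i\<ge>n. flip x D A i = 0"
    using x DA(1,2) by (auto simp: feas_def flip_def ones_def zeros_def)
  ultimately show ?thesis by (simp add: feas_def)
qed

lemma feas_eq_flip:
  assumes x: "x \<in> feas n p" and y: "y \<in> feas n p"
  obtains D A where "(D, A) \<in> swaps n x" "y = flip x D A"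
proof
  define D where "D = {i. i < n \<and> x i = 1 \<and> y i = 0}"
  define A where "A = {i. i < n \<and> x i = 0 \<and> y i = 1}"
  have DA: "D \<subseteq> ones n x" "A \<subseteq> zeros n x" by (auto simp: D_def A_def ones_def zeros_def)
  show y_flip: "y = flip x D A"
  proof
    fix i show "y i = flip x D A i"
    proof (cases "i < n")
      case True
      then have "x i \<in> {0, 1}" "y i \<in> {0, 1}" using x y by (simp_all add: feas_def)
      with True show ?thesis by (auto simp: flip_def D_def A_def)
    qed (use x y in \<open>simp add: feas_def flip_def D_def A_def\<close>)
  qed
  have "real (card D) - real (card A) = 0"
    using ip_diff_flip[OF DA, of "\<lambda>_. 1"] ip_one_feas[OF x] ip_one_feas[OF y] y_flip by simp
  with DA show "(D, A) \<in> swaps n x" by (simp add: swaps_def)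
qed

lemma gap_le_envelope:
  assumes x: "x \<in> feas n p" and c: "c \<in> unc n ch t" and y: "y \<in> feas n p"
  shows "ip n c x - ip n c y \<le> envelope (swaps n x) (swap_offset ch) (swap_slope ch) t"
proof -
  obtain D A where P: "(D, A) \<in> swaps n x" and y_flip: "y = flip x D A"
    using feas_eq_flip[OF x y] .
  note DA = swapsD[OF P]
  have "sum c D \<le> sum (\<lambda>i. (1 + t) * ch i) D" "sum (\<lambda>i. (1 - t) * ch i) A \<le> sum c A"
    using c DA(1,2) by (auto simp: unc_def ones_def zeros_def intro!: sum_mono)
  then have "ip n c x - ip n c y \<le> (1 + t) * sum ch D - (1 - t) * sum ch A"
    using ip_diff_flip[OF DA(1,2)] y_flip by (simp add: sum_distrib_left)
  also have "\<dots> \<le> envelope (swaps n x) (swap_offset ch) (swap_slope ch) t"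
    using envelope_ge[OF finite_swaps P, of "swap_offset ch" "swap_slope ch" t] by (simp add: swap_line)
  finally show ?thesis .
qed

lemma envelope_gap_attained:
  assumes x: "x \<in> feas n p" and ch: "\<forall>i<n. 0 \<le> ch i" and t: "t \<in> {0..1}"
  obtains c y where "c \<in> unc n ch t" "y \<in> feas n p"
    "ip n c x - ip n c y = envelope (swaps n x) (swap_offset ch) (swap_slope ch) t"
proof -
  have "optimal_swaps n ch x t \<noteq> {}"
    using active_nonempty[OF finite_swaps] empty_swap by blast
  then obtain D A where opt: "(D, A) \<in> optimal_swaps n ch x t" by auto
  then have P: "(D, A) \<in> swaps n x" by (simp add: active_def)
  note DA = swapsD[OF P]
  define c where "c i = (if i < n then (if x i = 1 then 1 + t else 1 - t) * ch i else 0)" for i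
  have "(1 - t) * ch i \<le> (1 + t) * ch i" if "i < n" for i
    using ch that t by (intro mult_right_mono) auto
  then have "c \<in> unc n ch t" by (auto simp: unc_def c_def)
  moreover have "flip x D A \<in> feas n p" using flip_feas[OF x P] .
  moreover have "sum c D = (1 + t) * sum ch D" "sum c A = (1 - t) * sum ch A"
    using DA(1,2) by (auto simp: c_def ones_def zeros_def sum_distrib_left intro!: sum.cong)
  then have "ip n c x - ip n c (flip x D A) = envelope (swaps n x) (swap_offset ch) (swap_slope ch) t"
    using ip_diff_flip[OF DA(1,2)] opt by (simp add: active_def swap_line)
  ultimately show ?thesis by (rule that)
qed

lemma reg_eq_envelope:
  assumes x: "x \<in> feas n p" and ch: "\<forall>i<n. 0 \<le> ch i" and t: "t \<in> {0..1}"
  shows "reg n p ch x t = envelope (swaps n x) (swap_offset ch) (swap_slope ch) t"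
proof -
  let ?E = "envelope (swaps n x) (swap_offset ch) (swap_slope ch) t"
  let ?gap = "\<lambda>c. ip n c x - Min ((\<lambda>y. ip n c y) ` feas n p)"
  have gap_le: "?gap c \<le> ?E" if c: "c \<in> unc n ch t" for c
  proof -
    obtain y where "y \<in> feas n p" "Min ((\<lambda>y. ip n c y) ` feas n p) = ip n c y"
      using obtains_MIN[OF finite_feas, of n p "\<lambda>y. ip n c y"] x by blast
    with gap_le_envelope[OF x c] show ?thesis by simp
  qed
  obtain c y where c: "c \<in> unc n ch t" and y: "y \<in> feas n p" and "ip n c x - ip n c y = ?E"
    using envelope_gap_attained[OF x ch t] .
  moreover have "Min ((\<lambda>y. ip n c y) ` feas n p) \<le> ip n c y"
    using finite_feas y by (intro Min_le) auto
  ultimately have "?gap c = ?E" using gap_le[OF c] by linarith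
  then show ?thesis
    unfolding reg_def using c gap_le by (intro cSup_eq_maximum) (auto intro!: image_eqI[of _ _ c])
qed

lemma card_ones_zeros:
  assumes x: "x \<in> feas n p"
  shows "card (ones n x) = p" "card (zeros n x) = n - p"
proof -
  have "x i = (if i \<in> ones n x then 1 else 0)" if "i < n" for i
    using x that by (auto simp: feas_def ones_def)
  then have "real p = sum (\<lambda>i. if i \<in> ones n x then 1 else 0) {..<n}"
    using x by (simp add: feas_def)
  also have "\<dots> = real (card ({..<n} \<inter> ones n x))"
    using sum.inter_restrict[OF finite_lessThan, where g = "\<lambda>_. 1 :: real" and B = "ones n x"] by simp
  also have "{..<n} \<inter> ones n x = ones n x" by (auto simp: ones_def)
  finally show card_ones: "card (ones n x) = p" by simp
  have "ones n x \<union> zeros n x = {..<n}" "ones n x \<inter> zeros n x = {}"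
    using x by (auto simp: feas_def ones_def zeros_def)
  then have "card (ones n x) + card (zeros n x) = n"
    by (metis card_Un_disjoint card_lessThan finite_ones finite_zeros)
  with card_ones show "card (zeros n x) = n - p" by simp
qed

definition max_subset_sum :: "(nat \<Rightarrow> real) \<Rightarrow> nat set \<Rightarrow> nat \<Rightarrow> real" where
  "max_subset_sum ch S k = Max (sum ch ` {D. D \<subseteq> S \<and> card D = k})"

definition min_subset_sum :: "(nat \<Rightarrow> real) \<Rightarrow> nat set \<Rightarrow> nat \<Rightarrow> real" where
  "min_subset_sum ch S k = Min (sum ch ` {D. D \<subseteq> S \<and> card D = k})"

lemma finite_subsets_card: "finite S \<Longrightarrow> finite {D. D \<subseteq> S \<and> card D = k}"
  by (rule finite_subset[of _ "Pow S"]) auto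

lemma max_subset_sum_ge: "finite S \<Longrightarrow> D \<subseteq> S \<Longrightarrow> sum ch D \<le> max_subset_sum ch S (card D)"
  unfolding max_subset_sum_def by (rule Max_ge) (simp_all add: finite_subsets_card)

lemma min_subset_sum_le: "finite S \<Longrightarrow> A \<subseteq> S \<Longrightarrow> min_subset_sum ch S (card A) \<le> sum ch A"
  unfolding min_subset_sum_def by (rule Min_le) (simp_all add: finite_subsets_card)

lemma max_subset_sum_attained:
  assumes "finite S" "k \<le> card S"
  obtains D where "D \<subseteq> S" "card D = k" "sum ch D = max_subset_sum ch S k"
proof -
  have "{D. D \<subseteq> S \<and> card D = k} \<noteq> {}"
    using obtain_subset_with_card_n[OF assms(2)] by blast
  then have "max_subset_sum ch S k \<in> sum ch ` {D. D \<subseteq> S \<and> card D = k}"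
    unfolding max_subset_sum_def using finite_subsets_card[OF assms(1)] by (intro Max_in) simp_all
  then show ?thesis using that by auto
qed

lemma min_subset_sum_attained:
  assumes "finite S" "k \<le> card S"
  obtains A where "A \<subseteq> S" "card A = k" "sum ch A = min_subset_sum ch S k"
proof -
  have "{A. A \<subseteq> S \<and> card A = k} \<noteq> {}"
    using obtain_subset_with_card_n[OF assms(2)] by blast
  then have "min_subset_sum ch S k \<in> sum ch ` {A. A \<subseteq> S \<and> card A = k}"
    unfolding min_subset_sum_def using finite_subsets_card[OF assms(1)] by (intro Min_in) simp_all
  then show ?thesis using that by auto
qed

text \<open>Among swaps of size \<open>k\<close> the best one takes the \<open>k\<close> heaviest ones and the \<open>k\<close> lightest
  zeros, for every \<open>t\<close> simultaneously.\<close>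
lemma envelope_swaps_eq_envelope_sizes:
  fixes n :: nat and x :: "nat \<Rightarrow> real"
  assumes t: "t \<in> {0..1}"
  defines "S \<equiv> ones n x" and "T \<equiv> zeros n x"
  shows "envelope (swaps n x) (swap_offset ch) (swap_slope ch) t
       = envelope {0..min (card S) (card T)}
           (\<lambda>k. max_subset_sum ch S k - min_subset_sum ch T k)
           (\<lambda>k. max_subset_sum ch S k + min_subset_sum ch T k) t"
    (is "_ = envelope ?K ?a ?b t")
proof -
  have size_line: "?a k + ?b k * t = (1 + t) * max_subset_sum ch S k - (1 - t) * min_subset_sum ch T k" for k
    by (simp add: algebra_simps)
  have swap_dominated: "\<exists>k\<in>?K. swap_offset ch P + swap_slope ch P * t \<le> ?a k + ?b k * t"
    if P: "P \<in> swaps n x" for P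
  proof -
    obtain D A where PDA: "P = (D, A)" by (cases P)
    note DA = swapsD[OF P[unfolded PDA]]
    have "card D \<in> ?K"
      using DA card_mono[OF finite_ones DA(1)] card_mono[OF finite_zeros DA(2)] by (simp add: S_def T_def)
    moreover have "sum ch D \<le> max_subset_sum ch S (card D)" "min_subset_sum ch T (card D) \<le> sum ch A"
      using max_subset_sum_ge[OF finite_ones DA(1)] min_subset_sum_le[OF finite_zeros DA(2)] DA(3)
      by (simp_all add: S_def T_def)
    then have "(1 + t) * sum ch D - (1 - t) * sum ch A
        \<le> (1 + t) * max_subset_sum ch S (card D) - (1 - t) * min_subset_sum ch T (card D)"
      using t by (intro diff_mono mult_left_mono) auto
    ultimately show ?thesis unfolding PDA swap_line size_line by blast
  qed
  have size_attained: "\<exists>P\<in>swaps n x. ?a k + ?b k * t \<le> swap_offset ch P + swap_slope ch P * t"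
    if k: "k \<in> ?K" for k
  proof -
    obtain D where D: "D \<subseteq> S" "card D = k" "sum ch D = max_subset_sum ch S k"
      using max_subset_sum_attained[of S k ch] k by (auto simp: S_def)
    obtain A where A: "A \<subseteq> T" "card A = k" "sum ch A = min_subset_sum ch T k"
      using min_subset_sum_attained[of T k ch] k by (auto simp: T_def)
    have "(D, A) \<in> swaps n x" using D A by (simp add: swaps_def S_def T_def)
    with D(3) A(3) show ?thesis unfolding size_line by (intro bexI[of _ "(D, A)"]) (simp_all add: swap_line)
  qed
  show ?thesis
    unfolding envelope_def
    by (rule Max_eq_if) (use finite_swaps swap_dominated size_attained in auto)
qed

lemma card_changepoints_reg:
  assumes x: "x \<in> feas n p" and ch: "\<forall>i<n. 0 \<le> ch i"
  shows "finite (changepoints (reg n p ch x)) \<and> card (changepoints (reg n p ch x)) \<le> min p (n - p)"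
proof -
  define K where "K = {0..min (card (ones n x)) (card (zeros n x))}"
  define a where "a k = max_subset_sum ch (ones n x) k - min_subset_sum ch (zeros n x) k" for k
  define b where "b k = max_subset_sum ch (ones n x) k + min_subset_sum ch (zeros n x) k" for k
  have "reg n p ch x s = envelope K a b s" if "s \<in> {0..1}" for s
    unfolding K_def a_def b_def
    using reg_eq_envelope[OF x ch that] envelope_swaps_eq_envelope_sizes[OF that] by simp
  then have "changepoints (reg n p ch x) = changepoints (envelope K a b)"
    by (rule changepoints_cong)
  moreover have "card K - 1 = min p (n - p)" using card_ones_zeros[OF x] by (simp add: K_def)
  moreover have "finite K" "K \<noteq> {}" by (simp_all add: K_def)
  ultimately show ?thesis using card_changepoints_envelope[of K a b] by simp
qed

section \<open>Breakpoints are critical ratios\<close>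

lemma optimal_swap_remove_le:
  assumes opt: "(D, A) \<in> optimal_swaps n ch x t" and "i \<in> D" "j \<in> A"
  shows "(1 - t) * ch j \<le> (1 + t) * ch i"
proof -
  have P: "(D, A) \<in> swaps n x" using opt by (simp add: active_def)
  note DA = swapsD[OF P]
  have "(D - {i}, A - {j}) \<in> swaps n x"
    using DA assms(2,3) by (auto simp: swaps_def)
  from envelope_ge[OF finite_swaps this, of "swap_offset ch" "swap_slope ch" t] opt
  have "(1 + t) * sum ch (D - {i}) - (1 - t) * sum ch (A - {j}) \<le> (1 + t) * sum ch D - (1 - t) * sum ch A"
    by (simp add: active_def swap_line)
  with DA assms(2,3) show ?thesis by (simp add: sum_diff1 algebra_simps)
qed

lemma optimal_swap_add_le:
  assumes opt: "(D, A) \<in> optimal_swaps n ch x t" and "i \<in> ones n x - D" "j \<in> zeros n x - A"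
  shows "(1 + t) * ch i \<le> (1 - t) * ch j"
proof -
  have P: "(D, A) \<in> swaps n x" using opt by (simp add: active_def)
  note DA = swapsD[OF P]
  have "(insert i D, insert j A) \<in> swaps n x"
    using DA assms(2,3) by (auto simp: swaps_def)
  from envelope_ge[OF finite_swaps this, of "swap_offset ch" "swap_slope ch" t] opt
  have "(1 + t) * sum ch (insert i D) - (1 - t) * sum ch (insert j A) \<le> (1 + t) * sum ch D - (1 - t) * sum ch A"
    by (simp add: active_def swap_line)
  with DA assms(2,3) show ?thesis by (simp add: algebra_simps)
qed

definition tie_free :: "nat \<Rightarrow> (nat \<Rightarrow> real) \<Rightarrow> (nat \<Rightarrow> real) \<Rightarrow> real \<Rightarrow> bool" where
  "tie_free n ch x t \<longleftrightarrow>
     (\<forall>i\<in>ones n x. \<forall>j\<in>zeros n x. (1 + t) * ch i = (1 - t) * ch j \<longrightarrow> ch i + ch j = 0)"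

lemma optimal_swaps_exchange_null:
  assumes ch: "\<forall>i<n. 0 \<le> ch i" and tie_free: "tie_free n ch x t"
    and P: "(D, A) \<in> optimal_swaps n ch x t" and Q: "(D', A') \<in> optimal_swaps n ch x t"
    and "D' - D \<noteq> {}" "A' - A \<noteq> {}"
  shows "sum ch (D' - D) = 0 \<and> sum ch (A' - A) = 0"
proof -
  have "ch i = 0 \<and> ch j = 0" if i: "i \<in> D' - D" and j: "j \<in> A' - A" for i j
  proof -
    have "D' \<subseteq> ones n x" "A' \<subseteq> zeros n x" using Q by (auto simp: active_def swaps_def)
    with i j have ij: "i \<in> ones n x" "j \<in> zeros n x" by auto
    have "(1 + t) * ch i \<le> (1 - t) * ch j" using optimal_swap_add_le[OF P] i j ij by blast
    moreover have "(1 - t) * ch j \<le> (1 + t) * ch i" using optimal_swap_remove_le[OF Q] i j by blast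
    ultimately have "ch i + ch j = 0" using tie_free ij unfolding tie_free_def by (meson order.antisym)
    moreover have "0 \<le> ch i" "0 \<le> ch j" using ch ij by (auto simp: ones_def zeros_def)
    ultimately show ?thesis by simp
  qed
  with assms(5,6) show ?thesis by (metis ex_in_conv sum.neutral)
qed

text \<open>In the application \<open>a, b, c, d\<close> are the weighted costs of \<open>D' - D\<close>, \<open>D - D'\<close>,
  \<open>A' - A\<close>, \<open>A - A'\<close> for two optimal swaps \<open>(D, A)\<close>, \<open>(D', A')\<close>, and \<open>na, nb, nc, nd\<close> their sizes.\<close>
lemma exchange_balance:
  fixes a b c d :: real and na nb nc nd :: nat
  assumes "0 \<le> a" "0 \<le> b" "0 \<le> c" "0 \<le> d" "a - b = c - d" "na + nd = nb + nc"
    and "na = 0 \<Longrightarrow> a = 0" "nb = 0 \<Longrightarrow> b = 0" "nc = 0 \<Longrightarrow> c = 0" "nd = 0 \<Longrightarrow> d = 0"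
    and "0 < na \<Longrightarrow> 0 < nc \<Longrightarrow> a = 0 \<and> c = 0" "0 < nb \<Longrightarrow> 0 < nd \<Longrightarrow> b = 0 \<and> d = 0"
  shows "a = b \<and> c = d"
  using assms by (cases "na = 0"; cases "nb = 0"; cases "nc = 0"; cases "nd = 0") auto

lemma optimal_swaps_same_slope:
  assumes ch: "\<forall>i<n. 0 \<le> ch i" and t: "0 \<le> t" "t < 1" and tie_free: "tie_free n ch x t"
    and P: "(D, A) \<in> optimal_swaps n ch x t" and Q: "(D', A') \<in> optimal_swaps n ch x t"
  shows "swap_slope ch (D, A) = swap_slope ch (D', A')"
proof -
  note DA = swapsD[of D A n x] and DA' = swapsD[of D' A' n x]
  have sw: "(D, A) \<in> swaps n x" "(D', A') \<in> swaps n x" using P Q by (simp_all add: active_def)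
  have fin: "finite D" "finite A" "finite D'" "finite A'" using DA(4,5)[OF sw(1)] DA'(4,5)[OF sw(2)] by auto
  have nonneg: "0 \<le> sum ch E" if "E \<subseteq> ones n x \<or> E \<subseteq> zeros n x" for E
    using ch that by (auto simp: ones_def zeros_def intro!: sum_nonneg)
  have split: "sum ch E = sum ch (E \<inter> E') + sum ch (E - E')" "card E = card (E \<inter> E') + card (E - E')"
    if "finite E" for E E' :: "nat set"
    using sum.Int_Diff[OF that] card_Int_Diff[OF that] by auto
  have "(1 + t) * sum ch D - (1 - t) * sum ch A = (1 + t) * sum ch D' - (1 - t) * sum ch A'"
    using P Q by (simp add: active_def swap_line)
  then have value_eq: "(1 + t) * sum ch (D' - D) - (1 + t) * sum ch (D - D')
      = (1 - t) * sum ch (A' - A) - (1 - t) * sum ch (A - A')"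
    using split[OF fin(1), of D'] split[OF fin(3), of D] split[OF fin(2), of A'] split[OF fin(4), of A]
    by (simp add: Int_commute algebra_simps)
  have card_eq: "card (D' - D) + card (A - A') = card (D - D') + card (A' - A)"
    using split[OF fin(1), of D'] split[OF fin(3), of D] split[OF fin(2), of A'] split[OF fin(4), of A]
      DA(3)[OF sw(1)] DA'(3)[OF sw(2)] by (simp add: Int_commute)
  have card0: "c * sum ch (X - Y) = 0" if "finite X" "card (X - Y) = 0" for X Y :: "nat set" and c :: real
    using that by (metis card_0_eq finite_Diff mult_zero_right sum.empty)
  have card_pos: "X - Y \<noteq> {}" if "0 < card (X - Y)" for X Y :: "nat set"
    using that by (metis card.empty less_irrefl)
  have "(1 + t) * sum ch (D' - D) = (1 + t) * sum ch (D - D') \<and> (1 - t) * sum ch (A' - A) = (1 - t) * sum ch (A - A')"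
  proof (rule exchange_balance[OF _ _ _ _ value_eq card_eq])
    show "0 \<le> (1 + t) * sum ch (D' - D)" "0 \<le> (1 + t) * sum ch (D - D')"
      "0 \<le> (1 - t) * sum ch (A' - A)" "0 \<le> (1 - t) * sum ch (A - A')"
      using t DA(1,2)[OF sw(1)] DA'(1,2)[OF sw(2)] by (auto intro!: mult_nonneg_nonneg nonneg)
  qed (use fin card0 card_pos optimal_swaps_exchange_null[OF ch tie_free P Q] optimal_swaps_exchange_null[OF ch tie_free Q P] in \<open>simp; blast\<close>)+
  then have "sum ch (D' - D) = sum ch (D - D')" "sum ch (A' - A) = sum ch (A - A')" using t by auto
  then show ?thesis
    using split[OF fin(1), of D'] split[OF fin(3), of D] split[OF fin(2), of A'] split[OF fin(4), of A]
    by (simp add: swap_slope_def Int_commute)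
qed

definition critical_ratios :: "nat \<Rightarrow> (nat \<Rightarrow> real) \<Rightarrow> real set" where
  "critical_ratios n ch = {t \<in> {0..1}. \<exists>i<n. \<exists>j<n. 0 < ch i + ch j \<and> (1 + t) * ch i = (1 - t) * ch j}"

lemma changepoints_reg_subset_critical_ratios:
  assumes x: "x \<in> feas n p" and ch: "\<forall>i<n. 0 \<le> ch i"
  shows "changepoints (reg n p ch x) \<subseteq> critical_ratios n ch"
proof
  fix t assume t_reg: "t \<in> changepoints (reg n p ch x)"
  then have t: "0 < t" "t < 1" by (auto simp: changepoints_def)
  have "changepoints (reg n p ch x) = changepoints (envelope (swaps n x) (swap_offset ch) (swap_slope ch))"
    using reg_eq_envelope[OF x ch] by (rule changepoints_cong)
  with t_reg obtain P Q where "P \<in> optimal_swaps n ch x t" "Q \<in> optimal_swaps n ch x t"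
    "swap_slope ch P < swap_slope ch Q"
    using changepoint_envelopeD[OF finite_swaps] empty_swap by blast
  then have "\<not> tie_free n ch x t"
    using optimal_swaps_same_slope[OF ch less_imp_le[OF t(1)] t(2)] by (metis less_irrefl prod.collapse)
  then obtain i j where "i \<in> ones n x" "j \<in> zeros n x" "(1 + t) * ch i = (1 - t) * ch j" "ch i + ch j \<noteq> 0"
    unfolding tie_free_def by blast
  moreover from this have "i < n" "j < n" by (simp_all add: ones_def zeros_def)
  moreover from this have "0 < ch i + ch j"
    using ch \<open>ch i + ch j \<noteq> 0\<close> by (simp add: add_nonneg_nonneg order_less_le)
  ultimately show "t \<in> critical_ratios n ch"
    using t unfolding critical_ratios_def by auto
qed

lemma card_critical_ratios: "finite (critical_ratios n ch) \<and> card (critical_ratios n ch) \<le> n\<^sup>2"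
proof -
  let ?ratio = "\<lambda>(i, j). (ch j - ch i) / (ch i + ch j)"
  have "critical_ratios n ch \<subseteq> ?ratio ` ({..<n} \<times> {..<n})"
  proof
    fix t assume "t \<in> critical_ratios n ch"
    then obtain i j where ij: "i < n" "j < n" "0 < ch i + ch j" "(1 + t) * ch i = (1 - t) * ch j"
      by (auto simp: critical_ratios_def)
    then have "t = ?ratio (i, j)" by (simp add: eq_divide_eq algebra_simps)
    with ij show "t \<in> ?ratio ` ({..<n} \<times> {..<n})" by blast
  qed
  moreover have "card (?ratio ` ({..<n} \<times> {..<n})) \<le> n\<^sup>2"
    using card_image_le[of "{..<n} \<times> {..<n}" ?ratio] by (simp add: card_cartesian_product power2_eq_square)
  ultimately show ?thesis by (meson card_mono finite_SigmaI finite_imageI finite_lessThan finite_subset le_trans)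
qed

theorem theorem4:
  shows "\<exists>C D :: real.
     \<forall>(n::nat) (p::nat) (ch :: nat \<Rightarrow> real).
       n \<ge> 1 \<longrightarrow> p \<le> n \<longrightarrow> (\<forall>i<n. ch i \<ge> 0) \<longrightarrow>
         (\<forall>x \<in> feas n p. finite (changepoints (reg n p ch x)) \<and>
             real (card (changepoints (reg n p ch x))) \<le> C * real (min p (n - p)))
       \<and> (\<exists>L. L \<subseteq> {0..1} \<and> finite L \<and> real (card L) \<le> D * real n ^ 2 \<and>
             (\<forall>x \<in> feas n p. changepoints (reg n p ch x) \<subseteq> L))"
proof (intro exI[of _ 1] allI impI conjI ballI)
  fix n p :: nat and ch :: "nat \<Rightarrow> real" and x
  assume ch: "\<forall>i<n. ch i \<ge> 0" and x: "x \<in> feas n p"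
  show "finite (changepoints (reg n p ch x))"
    and "real (card (changepoints (reg n p ch x))) \<le> 1 * real (min p (n - p))"
    using card_changepoints_reg[OF x ch] by simp_all
next
  fix n p :: nat and ch :: "nat \<Rightarrow> real"
  assume ch: "\<forall>i<n. ch i \<ge> 0"
  have "critical_ratios n ch \<subseteq> {0..1}" by (auto simp: critical_ratios_def)
  moreover have "finite (critical_ratios n ch)" "real (card (critical_ratios n ch)) \<le> 1 * real n ^ 2"
    using card_critical_ratios[of n ch] of_nat_mono[of "card (critical_ratios n ch)" "n\<^sup>2"] by simp_all
  moreover have "\<forall>x \<in> feas n p. changepoints (reg n p ch x) \<subseteq> critical_ratios n ch"
    using changepoints_reg_subset_critical_ratios[OF _ ch] by blast
  ultimately show "\<exists>L. L \<subseteq> {0..1} \<and> finite L \<and> real (card L) \<le> 1 * real n ^ 2 \<and>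
      (\<forall>x \<in> feas n p. changepoints (reg n p ch x) \<subseteq> L)" by blast
qed

end
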